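(* Let $\mathsf{F},\mathsf{B}:\mathbf{Set}\to\mathbf{Set}$ be functors. If $\mathsf{F}$ and $\mathsf{B}$ preserve monomorphisms whose domain is the empty set, then every homomorphism $h:(X,f)\to(Y,g)$ in $\mathit{Dialg}(\mathsf{F},\mathsf{B})$ factors as $h=m\circ e$, where $e:(X,f)\to(X',f')$ and $m:(X',f')\to(Y,g)$ are dialgebra homomorphisms whose underlying functions are respectively surjective and injective, and this factorisation is unique up to isomorphism of dialgebras. Without the assumption on $\mathsf{F}$ and $\mathsf{B}$, such a factorisation still exists for every homomorphism $h:(X,f)\to(Y,g)$ with $X\neq\emptyset$.
   Context: For functors $\mathsf{F},\mathsf{B}:\mathbf{Set}\to\mathbf{Set}$, an $(\mathsf{F},\mathsf{B})$-dialgebra is a pair $(X,f)$ with $X$ a set (the carrier) and $f:\mathsf{F}X\to\mathsf{B}X$ a function. A homomorphism $h:(X,f)\to(Y,g)$ is a function $h:X\to Y$ with $g\circ\mathsf{F}h=\mathsf{B}h\circ f$. Dialgebras and homomorphisms form the category $\mathit{Dialg}(\mathsf{F},\mathsf{B})$. *)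

theory Defs
  imports "HOL-Library.FuncSet"
begin

text \<open>The category Set is modelled by the subsets of a (arbitrary) universe type 'u;
a morphism X -> Y is an extensional function in X ->_E Y (so that equality of morphisms is
HOL equality).\<close>

definition is_functor ::
  "('u set \<Rightarrow> 'v set) \<Rightarrow> ('u set \<Rightarrow> 'u set \<Rightarrow> ('u \<Rightarrow> 'u) \<Rightarrow> 'v \<Rightarrow> 'v) \<Rightarrow> bool" where
  "is_functor Fo Fm \<longleftrightarrow>
     (\<forall>X Y h. h \<in> X \<rightarrow>\<^sub>E Y \<longrightarrow> Fm X Y h \<in> Fo X \<rightarrow>\<^sub>E Fo Y) \<and>
     (\<forall>X. Fm X X (\<lambda>x\<in>X. x) = (\<lambda>y\<in>Fo X. y)) \<and>
     (\<forall>X Y Z h k. h \<in> X \<rightarrow>\<^sub>E Y \<longrightarrow> k \<in> Y \<rightarrow>\<^sub>E Z \<longrightarrow>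
        Fm X Z (compose X k h) = compose (Fo X) (Fm Y Z k) (Fm X Y h))"

text \<open>Monomorphisms in Set are the injective functions.\<close>
definition preserves_monos_empty_dom ::
  "('u set \<Rightarrow> 'v set) \<Rightarrow> ('u set \<Rightarrow> 'u set \<Rightarrow> ('u \<Rightarrow> 'u) \<Rightarrow> 'v \<Rightarrow> 'v) \<Rightarrow> bool" where
  "preserves_monos_empty_dom Fo Fm \<longleftrightarrow>
     (\<forall>X Y h. X = {} \<longrightarrow> h \<in> X \<rightarrow>\<^sub>E Y \<longrightarrow> inj_on h X \<longrightarrow> inj_on (Fm X Y h) (Fo X))"

definition dialg :: "('u set \<Rightarrow> 'v set) \<Rightarrow> ('u set \<Rightarrow> 'w set) \<Rightarrow> 'u set \<Rightarrow> ('v \<Rightarrow> 'w) \<Rightarrow> bool" where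
  "dialg Fo Bo X f \<longleftrightarrow> f \<in> Fo X \<rightarrow>\<^sub>E Bo X"

definition dhom ::
  "('u set \<Rightarrow> 'v set) \<Rightarrow> ('u set \<Rightarrow> 'u set \<Rightarrow> ('u \<Rightarrow> 'u) \<Rightarrow> 'v \<Rightarrow> 'v) \<Rightarrow>
   ('u set \<Rightarrow> 'w set) \<Rightarrow> ('u set \<Rightarrow> 'u set \<Rightarrow> ('u \<Rightarrow> 'u) \<Rightarrow> 'w \<Rightarrow> 'w) \<Rightarrow>
   'u set \<Rightarrow> ('v \<Rightarrow> 'w) \<Rightarrow> 'u set \<Rightarrow> ('v \<Rightarrow> 'w) \<Rightarrow> ('u \<Rightarrow> 'u) \<Rightarrow> bool" where
  "dhom Fo Fm Bo Bm X f Y g h \<longleftrightarrow>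
     h \<in> X \<rightarrow>\<^sub>E Y \<and> compose (Fo X) g (Fm X Y h) = compose (Fo X) (Bm X Y h) f"

definition dialg_iso where
  "dialg_iso Fo Fm Bo Bm X f Y g i \<longleftrightarrow>
     dhom Fo Fm Bo Bm X f Y g i \<and>
     (\<exists>j. dhom Fo Fm Bo Bm Y g X f j \<and> compose X j i = (\<lambda>x\<in>X. x) \<and> compose Y i j = (\<lambda>y\<in>Y. y))"

definition epi_mono_fact where
  "epi_mono_fact Fo Fm Bo Bm X f Y g h X' f' e m \<longleftrightarrow>
     dialg Fo Bo X' f' \<and> dhom Fo Fm Bo Bm X f X' f' e \<and> dhom Fo Fm Bo Bm X' f' Y g m \<and>
     e ` X = X' \<and> inj_on m X' \<and> h = compose X m e"

end

theory Submission
  imports Defs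
begin

(* A homomorphism h : (X,f) -> (Y,g) of (F,B)-dialgebras factors through its image X' = h`X:
   e = h corestricted to X' is surjective, the inclusion m : X' -> Y is injective, and the
   structure on X' is f' = B e o f o F s, where s is a section of e.  That m is a homomorphism
   is a computation with functoriality; that e is one follows by cancelling B m, which is
   injective because every Set-functor preserves monos with nonempty domain (they split).
   If X is empty, h itself, read as a map {} -> {}, gives the factorisation (through (X,f)).

   For uniqueness, two factorisations m1 o e1 = m2 o e2 have monos with the same image, so each
   mi factors through the other by a comparison map; the comparison maps are mutually inverse
   by injectivity of the mi and are homomorphisms by the same cancellation of B m, which now
   needs B to preserve all monos, including those with empty domain. *)

lemma compose_eqI:
  assumes "\<And>x. x \<in> X \<Longrightarrow> k (h x) = p x" and "p \<in> extensional X"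
  shows "compose X k h = p"
  using assms by (auto simp: compose_def restrict_def extensional_def fun_eq_iff)

lemma compose_PiE:
  assumes "f \<in> A \<rightarrow>\<^sub>E B" and "g \<in> B \<rightarrow>\<^sub>E C"
  shows "compose A g f \<in> A \<rightarrow>\<^sub>E C"
  using assms by (auto simp: compose_def)

lemma compose_cancel_inj:
  assumes "inj_on m B" and a: "a \<in> A \<rightarrow>\<^sub>E B" and b: "b \<in> A \<rightarrow>\<^sub>E B"
    and eq: "compose A m a = compose A m b"
  shows "a = b"
proof (rule PiE_ext[OF a b])
  fix x assume x: "x \<in> A"
  then have "m (a x) = m (b x)" using eq by (metis compose_eq)
  then show "a x = b x" using assms(1) a b x by (auto dest: inj_onD)
qed

lemma inj_retraction:
  assumes h: "h \<in> X \<rightarrow> Y" and inj: "inj_on h X" and ne: "X \<noteq> {}"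
  shows "\<exists>r \<in> Y \<rightarrow>\<^sub>E X. compose X r h = (\<lambda>x\<in>X. x)"
proof -
  obtain x0 where x0: "x0 \<in> X" using ne by blast
  define r where "r = (\<lambda>y\<in>Y. if y \<in> h ` X then inv_into X h y else x0)"
  have "r \<in> Y \<rightarrow>\<^sub>E X" using x0 by (auto simp: r_def inv_into_into)
  moreover have "compose X r h = (\<lambda>x\<in>X. x)"
    using h inj by (intro compose_eqI) (auto simp: r_def)
  ultimately show ?thesis by blast
qed

lemma functor_map_closed:
  assumes "is_functor Fo Fm" and "h \<in> X \<rightarrow>\<^sub>E Y" and "x \<in> Fo X"
  shows "Fm X Y h x \<in> Fo Y"
  using assms unfolding is_functor_def by blast

lemma functor_comp_apply:
  assumes "is_functor Fo Fm" and "h \<in> X \<rightarrow>\<^sub>E Y" and "k \<in> Y \<rightarrow>\<^sub>E Z" and "x \<in> Fo X"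
  shows "Fm X Z (compose X k h) x = Fm Y Z k (Fm X Y h x)"
proof -
  have "Fm X Z (compose X k h) = compose (Fo X) (Fm Y Z k) (Fm X Y h)"
    using assms(1-3) unfolding is_functor_def by blast
  then show ?thesis using assms(4) by (simp add: compose_eq)
qed

lemma functor_id_apply:
  assumes "is_functor Fo Fm" and "x \<in> Fo X"
  shows "Fm X X (\<lambda>x\<in>X. x) x = x"
  using assms unfolding is_functor_def by simp

text \<open>Functors preserve split monomorphisms: a retraction of h is mapped to one of F h.\<close>
lemma functor_inj_of_retraction:
  assumes F: "is_functor Fo Fm" and h: "h \<in> X \<rightarrow>\<^sub>E Y" and r: "r \<in> Y \<rightarrow>\<^sub>E X"
    and retr: "compose X r h = (\<lambda>x\<in>X. x)"
  shows "inj_on (Fm X Y h) (Fo X)"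
proof (rule inj_onI)
  fix a b assume a: "a \<in> Fo X" and b: "b \<in> Fo X" and eq: "Fm X Y h a = Fm X Y h b"
  have "a = Fm Y X r (Fm X Y h a)"
    using functor_comp_apply[OF F h r a] functor_id_apply[OF F a] retr by simp
  also have "\<dots> = Fm Y X r (Fm X Y h b)" using eq by simp
  also have "\<dots> = b"
    using functor_comp_apply[OF F h r b] functor_id_apply[OF F b] retr by simp
  finally show "a = b" .
qed

lemma functor_preserves_monos:
  assumes F: "is_functor Fo Fm" and h: "h \<in> X \<rightarrow>\<^sub>E Y" and inj: "inj_on h X"
    and empty: "X = {} \<Longrightarrow> preserves_monos_empty_dom Fo Fm"
  shows "inj_on (Fm X Y h) (Fo X)"
proof (cases "X = {}")
  case True
  then show ?thesis using empty h inj unfolding preserves_monos_empty_dom_def by blast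
next
  case False
  then obtain r where "r \<in> Y \<rightarrow>\<^sub>E X" "compose X r h = (\<lambda>x\<in>X. x)"
    using inj_retraction[of h X Y] h inj by blast
  then show ?thesis using functor_inj_of_retraction[OF F h] by blast
qed

lemma dhom_fun: "dhom Fo Fm Bo Bm X f Y g h \<Longrightarrow> h \<in> X \<rightarrow>\<^sub>E Y"
  unfolding dhom_def by blast

lemma dhom_apply:
  assumes "dhom Fo Fm Bo Bm X f Y g h" and "x \<in> Fo X"
  shows "g (Fm X Y h x) = Bm X Y h (f x)"
  using assms unfolding dhom_def by (metis compose_eq)

lemma dhomI:
  assumes "h \<in> X \<rightarrow>\<^sub>E Y" and "\<And>x. x \<in> Fo X \<Longrightarrow> g (Fm X Y h x) = Bm X Y h (f x)"
  shows "dhom Fo Fm Bo Bm X f Y g h"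
  unfolding dhom_def using assms by (auto simp: compose_def intro!: restrict_ext)

lemma dhom_cancel_mono:
  assumes F: "is_functor Fo Fm" and B: "is_functor Bo Bm"
    and d1: "dialg Fo Bo X1 f1" and d2: "dialg Fo Bo X2 f2"
    and i: "i \<in> X1 \<rightarrow>\<^sub>E X2" and fact: "compose X1 m2 i = m1"
    and h1: "dhom Fo Fm Bo Bm X1 f1 Y g m1" and h2: "dhom Fo Fm Bo Bm X2 f2 Y g m2"
    and inj: "inj_on (Bm X2 Y m2) (Bo X2)"
  shows "dhom Fo Fm Bo Bm X1 f1 X2 f2 i"
proof (rule dhomI[OF i])
  have m2: "m2 \<in> X2 \<rightarrow>\<^sub>E Y" using dhom_fun[OF h2] .
  fix y assume y: "y \<in> Fo X1"
  have Fi: "Fm X1 X2 i y \<in> Fo X2" using functor_map_closed[OF F i y] .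
  have "Bm X2 Y m2 (f2 (Fm X1 X2 i y)) = g (Fm X2 Y m2 (Fm X1 X2 i y))"
    using dhom_apply[OF h2 Fi] by simp
  also have "\<dots> = g (Fm X1 Y m1 y)" using functor_comp_apply[OF F i m2 y] fact by simp
  also have "\<dots> = Bm X1 Y m1 (f1 y)" using dhom_apply[OF h1 y] .
  also have "\<dots> = Bm X2 Y m2 (Bm X1 X2 i (f1 y))"
    using functor_comp_apply[OF B i m2] fact d1 y by (auto simp: dialg_def)
  finally show "f2 (Fm X1 X2 i y) = Bm X1 X2 i (f1 y)"
    using inj Fi functor_map_closed[OF B i] d1 d2 y by (auto simp: dialg_def dest: inj_onD)
qed

section \<open>Existence of the factorisation\<close>

definition transported :: "('u set \<Rightarrow> 'u set \<Rightarrow> ('u \<Rightarrow> 'u) \<Rightarrow> 'v \<Rightarrow> 'v) \<Rightarrow>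
    ('u set \<Rightarrow> 'u set \<Rightarrow> ('u \<Rightarrow> 'u) \<Rightarrow> 'w \<Rightarrow> 'w) \<Rightarrow> ('u set \<Rightarrow> 'v set) \<Rightarrow>
    'u set \<Rightarrow> 'u set \<Rightarrow> ('v \<Rightarrow> 'w) \<Rightarrow> ('u \<Rightarrow> 'u) \<Rightarrow> ('u \<Rightarrow> 'u) \<Rightarrow> 'v \<Rightarrow> 'w" where
  "transported Fm Bm Fo X X' f e s = (\<lambda>y\<in>Fo X'. Bm X X' e (f (Fm X' X s y)))"

lemma transported_dialg:
  assumes F: "is_functor Fo Fm" and B: "is_functor Bo Bm" and df: "dialg Fo Bo X f"
    and e: "e \<in> X \<rightarrow>\<^sub>E X'" and s: "s \<in> X' \<rightarrow>\<^sub>E X"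
  shows "dialg Fo Bo X' (transported Fm Bm Fo X X' f e s)"
  using functor_map_closed[OF F s] functor_map_closed[OF B e] df
  by (auto simp: dialg_def transported_def)

text \<open>If h = m o e and e has a section s, then m is a homomorphism out of the transported
  structure: B m (B e (f (F s y))) = B h (f (F s y)) = g (F h (F s y)) = g (F m y).\<close>
lemma transported_dhom:
  assumes F: "is_functor Fo Fm" and B: "is_functor Bo Bm" and df: "dialg Fo Bo X f"
    and hh: "dhom Fo Fm Bo Bm X f Y g h"
    and e: "e \<in> X \<rightarrow>\<^sub>E X'" and s: "s \<in> X' \<rightarrow>\<^sub>E X" and m: "m \<in> X' \<rightarrow>\<^sub>E Y"
    and sect: "compose X' e s = (\<lambda>y\<in>X'. y)" and fact: "compose X m e = h"
  shows "dhom Fo Fm Bo Bm X' (transported Fm Bm Fo X X' f e s) Y g m"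
proof (rule dhomI[OF m])
  have h: "h \<in> X \<rightarrow>\<^sub>E Y" using dhom_fun[OF hh] .
  have hs: "compose X' h s = m"
  proof -
    have "compose X' h s = compose X' m (compose X' e s)"
      using compose_assoc[of s X' X m e] s fact by (auto simp: PiE_iff)
    also have "\<dots> = m" using sect compose_Id[of m X' Y] m by (simp add: PiE_iff)
    finally show ?thesis .
  qed
  fix y assume y: "y \<in> Fo X'"
  have Fs: "Fm X' X s y \<in> Fo X" using functor_map_closed[OF F s y] .
  have "g (Fm X' Y m y) = g (Fm X Y h (Fm X' X s y))"
    using functor_comp_apply[OF F s h y] hs by simp
  also have "\<dots> = Bm X Y h (f (Fm X' X s y))" using dhom_apply[OF hh Fs] .
  also have "\<dots> = Bm X' Y m (Bm X X' e (f (Fm X' X s y)))"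
    using functor_comp_apply[OF B e m] fact df Fs by (auto simp: dialg_def)
  finally show "g (Fm X' Y m y) = Bm X' Y m (transported Fm Bm Fo X X' f e s y)"
    using y by (simp add: transported_def)
qed

lemma image_factorisation:
  assumes F: "is_functor Fo Fm" and B: "is_functor Bo Bm" and ne: "X \<noteq> {}"
    and df: "dialg Fo Bo X f" and dg: "dialg Fo Bo Y g" and hh: "dhom Fo Fm Bo Bm X f Y g h"
  defines "s \<equiv> \<lambda>y\<in>h ` X. inv_into X h y"
  shows "epi_mono_fact Fo Fm Bo Bm X f Y g h
           (h ` X) (transported Fm Bm Fo X (h ` X) f h s) h (\<lambda>y\<in>h ` X. y)"
proof -
  let ?X' = "h ` X" and ?m = "\<lambda>y\<in>h ` X. y"
  let ?f' = "transported Fm Bm Fo X ?X' f h s"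
  have h: "h \<in> X \<rightarrow>\<^sub>E Y" using dhom_fun[OF hh] .
  have e: "h \<in> X \<rightarrow>\<^sub>E ?X'" using h by auto
  have s: "s \<in> ?X' \<rightarrow>\<^sub>E X" by (auto simp: s_def inv_into_into)
  have m: "?m \<in> ?X' \<rightarrow>\<^sub>E Y" using h by auto
  have sect: "compose ?X' h s = (\<lambda>y\<in>?X'. y)"
    unfolding s_def by (rule compose_id_inv_into) simp
  have fact: "compose X ?m h = h"
    using h by (intro compose_eqI) (auto simp: PiE_iff)
  have inj: "inj_on ?m ?X'" by (simp add: inj_on_def)
  have d': "dialg Fo Bo ?X' ?f'" using transported_dialg[OF F B df e s] .
  have mhom: "dhom Fo Fm Bo Bm ?X' ?f' Y g ?m"
    using transported_dhom[OF F B df hh e s m sect fact] .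
  have "inj_on (Bm ?X' Y ?m) (Bo ?X')"
    using functor_preserves_monos[OF B m inj] ne by blast
  then have ehom: "dhom Fo Fm Bo Bm X f ?X' ?f' h"
    using dhom_cancel_mono[OF F B df d' e fact hh mhom] by blast
  show ?thesis
    unfolding epi_mono_fact_def using d' ehom mhom inj fact by simp
qed

lemma empty_factorisation:
  assumes F: "is_functor Fo Fm" and B: "is_functor Bo Bm" and empty: "X = {}"
    and df: "dialg Fo Bo X f" and hh: "dhom Fo Fm Bo Bm X f Y g h"
  shows "epi_mono_fact Fo Fm Bo Bm X f Y g h X f h h"
proof -
  have hid: "h = (\<lambda>x\<in>X. x)" using dhom_fun[OF hh] empty by auto
  have ehom: "dhom Fo Fm Bo Bm X f X f h"
  proof (rule dhomI)
    show "h \<in> X \<rightarrow>\<^sub>E X" using hid by simp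
    fix x assume x: "x \<in> Fo X"
    then have "f x \<in> Bo X" using df by (auto simp: dialg_def)
    then show "f (Fm X X h x) = Bm X X h (f x)"
      using functor_id_apply[OF F x] functor_id_apply[OF B] hid by simp
  qed
  have "h = compose X h h" using empty hid by (simp add: compose_def restrict_def)
  then show ?thesis unfolding epi_mono_fact_def using df ehom hh empty by auto
qed

lemma factorisation_exists:
  assumes "is_functor Fo Fm" and "is_functor Bo Bm"
    and "dialg Fo Bo X f" and "dialg Fo Bo Y g" and "dhom Fo Fm Bo Bm X f Y g h"
  shows "\<exists>X' f' e m. epi_mono_fact Fo Fm Bo Bm X f Y g h X' f' e m"
  using image_factorisation[OF assms(1,2) _ assms(3-5)] empty_factorisation[OF assms(1,2) _ assms(3,5)]
  by (cases "X = {}") blast+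

section \<open>Uniqueness of the factorisation\<close>

lemma factor_through_inj:
  assumes m1: "m1 \<in> X1 \<rightarrow>\<^sub>E Y" and inj: "inj_on m2 X2" and img: "m1 ` X1 \<subseteq> m2 ` X2"
  shows "\<exists>i \<in> X1 \<rightarrow>\<^sub>E X2. compose X1 m2 i = m1"
proof -
  define i where "i = (\<lambda>y\<in>X1. inv_into X2 m2 (m1 y))"
  have "i \<in> X1 \<rightarrow>\<^sub>E X2" using img by (auto simp: i_def inv_into_into)
  moreover have "compose X1 m2 i = m1"
    using img m1 by (intro compose_eqI) (auto simp: i_def f_inv_into_f PiE_iff)
  ultimately show ?thesis by blast
qed

lemma epi_mono_fact_image:
  assumes "epi_mono_fact Fo Fm Bo Bm X f Y g h X' f' e m"
  shows "m ` X' = h ` X"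
  using assms unfolding epi_mono_fact_def by (auto simp: compose_eq)

lemma comparison_map:
  assumes F: "is_functor Fo Fm" and B: "is_functor Bo Bm"
    and P: "preserves_monos_empty_dom Bo Bm"
    and E1: "epi_mono_fact Fo Fm Bo Bm X f Y g h X1 f1 e1 m1"
    and E2: "epi_mono_fact Fo Fm Bo Bm X f Y g h X2 f2 e2 m2"
  obtains i where "i \<in> X1 \<rightarrow>\<^sub>E X2" "dhom Fo Fm Bo Bm X1 f1 X2 f2 i"
    "compose X1 m2 i = m1" "compose X i e1 = e2"
proof -
  have d1: "dialg Fo Bo X1 f1" and he1: "dhom Fo Fm Bo Bm X f X1 f1 e1"
    and hm1: "dhom Fo Fm Bo Bm X1 f1 Y g m1" and h1: "h = compose X m1 e1"
    using E1 unfolding epi_mono_fact_def by auto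
  have d2: "dialg Fo Bo X2 f2" and he2: "dhom Fo Fm Bo Bm X f X2 f2 e2"
    and hm2: "dhom Fo Fm Bo Bm X2 f2 Y g m2" and inj2: "inj_on m2 X2"
    and h2: "h = compose X m2 e2"
    using E2 unfolding epi_mono_fact_def by auto
  obtain i where i: "i \<in> X1 \<rightarrow>\<^sub>E X2" and fact: "compose X1 m2 i = m1"
    using factor_through_inj[OF dhom_fun[OF hm1] inj2]
      epi_mono_fact_image[OF E1] epi_mono_fact_image[OF E2] by blast
  have "inj_on (Bm X2 Y m2) (Bo X2)"
    using functor_preserves_monos[OF B dhom_fun[OF hm2] inj2] P by blast
  then have ihom: "dhom Fo Fm Bo Bm X1 f1 X2 f2 i"
    using dhom_cancel_mono[OF F B d1 d2 i fact hm1 hm2] by blast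
  have e1: "e1 \<in> X \<rightarrow>\<^sub>E X1" using dhom_fun[OF he1] .
  have "compose X m2 (compose X i e1) = compose X m2 e2"
    using compose_assoc[of e1 X X1 m2 i] e1 fact h1 h2 by auto
  then have "compose X i e1 = e2"
    using compose_cancel_inj[OF inj2 compose_PiE[OF e1 i] dhom_fun[OF he2]] by blast
  then show ?thesis using that i ihom fact by blast
qed

lemma comparison_inverse:
  assumes i: "i \<in> X1 \<rightarrow>\<^sub>E X2" and j: "j \<in> X2 \<rightarrow>\<^sub>E X1" and m1: "m1 \<in> X1 \<rightarrow>\<^sub>E Y"
    and inj1: "inj_on m1 X1" and fi: "compose X1 m2 i = m1" and fj: "compose X2 m1 j = m2"
  shows "compose X1 j i = (\<lambda>x\<in>X1. x)"
proof (rule compose_cancel_inj[OF inj1 compose_PiE[OF i j]])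
  show "(\<lambda>x\<in>X1. x) \<in> X1 \<rightarrow>\<^sub>E X1" by simp
  have "compose X1 m1 (compose X1 j i) = m1"
    using compose_assoc[of i X1 X2 m1 j] i fi fj by auto
  also have "\<dots> = compose X1 m1 (\<lambda>x\<in>X1. x)" using compose_Id[of m1 X1 Y] m1 by (simp add: PiE_iff)
  finally show "compose X1 m1 (compose X1 j i) = compose X1 m1 (\<lambda>x\<in>X1. x)" .
qed

lemma factorisation_unique:
  assumes F: "is_functor Fo Fm" and B: "is_functor Bo Bm"
    and P: "preserves_monos_empty_dom Bo Bm"
    and E1: "epi_mono_fact Fo Fm Bo Bm X f Y g h X1 f1 e1 m1"
    and E2: "epi_mono_fact Fo Fm Bo Bm X f Y g h X2 f2 e2 m2"
  shows "\<exists>i. dialg_iso Fo Fm Bo Bm X1 f1 X2 f2 i \<and> compose X i e1 = e2 \<and> compose X1 m2 i = m1"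
proof -
  obtain i where i: "i \<in> X1 \<rightarrow>\<^sub>E X2" "dhom Fo Fm Bo Bm X1 f1 X2 f2 i"
      "compose X1 m2 i = m1" "compose X i e1 = e2"
    using comparison_map[OF F B P E1 E2] .
  obtain j where j: "j \<in> X2 \<rightarrow>\<^sub>E X1" "dhom Fo Fm Bo Bm X2 f2 X1 f1 j" "compose X2 m1 j = m2"
    using comparison_map[OF F B P E2 E1] .
  have m1: "m1 \<in> X1 \<rightarrow>\<^sub>E Y" "inj_on m1 X1" and m2: "m2 \<in> X2 \<rightarrow>\<^sub>E Y" "inj_on m2 X2"
    using E1 E2 unfolding epi_mono_fact_def by (auto dest: dhom_fun)
  have "compose X1 j i = (\<lambda>x\<in>X1. x)" "compose X2 i j = (\<lambda>x\<in>X2. x)"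
    using comparison_inverse[OF i(1) j(1) m1 i(3) j(3)]
      comparison_inverse[OF j(1) i(1) m2 j(3) i(3)] by auto
  then have "dialg_iso Fo Fm Bo Bm X1 f1 X2 f2 i"
    unfolding dialg_iso_def using i(2) j(2) by blast
  then show ?thesis using i(3,4) by blast
qed

theorem proposition1:
  fixes Fo :: "'u set \<Rightarrow> 'v set" and Fm :: "'u set \<Rightarrow> 'u set \<Rightarrow> ('u \<Rightarrow> 'u) \<Rightarrow> 'v \<Rightarrow> 'v"
    and Bo :: "'u set \<Rightarrow> 'w set" and Bm :: "'u set \<Rightarrow> 'u set \<Rightarrow> ('u \<Rightarrow> 'u) \<Rightarrow> 'w \<Rightarrow> 'w"
  assumes "is_functor Fo Fm" and "is_functor Bo Bm"
  shows
   "(preserves_monos_empty_dom Fo Fm \<and> preserves_monos_empty_dom Bo Bm \<longrightarrow>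
      (\<forall>X f Y g h. dialg Fo Bo X f \<longrightarrow> dialg Fo Bo Y g \<longrightarrow> dhom Fo Fm Bo Bm X f Y g h \<longrightarrow>
         (\<exists>X' f' e m. epi_mono_fact Fo Fm Bo Bm X f Y g h X' f' e m) \<and>
         (\<forall>X1 f1 e1 m1 X2 f2 e2 m2.
            epi_mono_fact Fo Fm Bo Bm X f Y g h X1 f1 e1 m1 \<longrightarrow>
            epi_mono_fact Fo Fm Bo Bm X f Y g h X2 f2 e2 m2 \<longrightarrow>
            (\<exists>i. dialg_iso Fo Fm Bo Bm X1 f1 X2 f2 i \<and>
                 compose X i e1 = e2 \<and> compose X1 m2 i = m1)))) \<and>
    (\<forall>X f Y g h. X \<noteq> {} \<longrightarrow> dialg Fo Bo X f \<longrightarrow> dialg Fo Bo Y g \<longrightarrow>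
         dhom Fo Fm Bo Bm X f Y g h \<longrightarrow>
         (\<exists>X' f' e m. epi_mono_fact Fo Fm Bo Bm X f Y g h X' f' e m))"
  using factorisation_exists[OF assms] factorisation_unique[OF assms] by blast

end
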